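(* For every integer $a\geq 1$, $$\sum_{n=1}^{\infty}\frac{(-1)^n\widetilde H_{n-1}^{(2a)}}{n}=\frac12\zeta(2a+1)-\Big(a+\frac12\Big)\widetilde\zeta(2a+1)+\ln 2\,\zeta(2a)+\sum_{j=1}^{a-1}\widetilde\zeta(2j+1)\zeta(2a-2j),$$ where an empty sum equals $0$.
   Context: For integers $b\geq 1$: $\widetilde H_0^{(b)}=0$ and $\widetilde H_n^{(b)}=\sum_{k=1}^{n}\frac{(-1)^{k-1}}{k^b}$ for $n\geq 1$. For real $s>1$, $\widetilde\zeta(s)=\sum_{n\geq 1}\frac{(-1)^{n-1}}{n^s}$, and $\zeta$ is the Riemann zeta function. The series on the left converges (conditionally). *)

theory Defs
  imports "HOL-Analysis.Analysis"
begin

definition altH :: "nat \<Rightarrow> nat \<Rightarrow> real" where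
  "altH b n = (\<Sum>k=1..n. (-1) ^ (k - 1) / (real k) ^ b)"

definition zetaN :: "nat \<Rightarrow> real" where
  "zetaN s = (\<Sum>n. 1 / (real (Suc n)) ^ s)"

definition altzetaN :: "nat \<Rightarrow> real" where
  "altzetaN s = (\<Sum>n. (-1) ^ n / (real (Suc n)) ^ s)"

end

theory Submission
  imports Defs
begin

text \<open>
  Summation by parts turns the series into A(2a) - ln 2 * eta(2a), where
  A(s) = sum_(k >= 1) (-1)^(k-1) H~_k / k^s is the alternating Euler sum alt_euler_sum.
  To evaluate A(2a), the absolutely convergent double series
  sum_(i \<noteq> j) (-1)^(j+1) / (i^(2a-2) j (j^2 - i^2)) over i, j >= 1 (double_term) is summed
  in both orders.
  Over j first, partial fractions in j reduce each row to tails of the alternating harmonic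
  series, and the rows add up to an expression in A(2a), zeta(2a), eta(2a), zeta(2a+1) and
  eta(2a+1). Over i first, the finite geometric expansion of 1 / (i^(2a-2) (j^2 - i^2)) in powers
  of i^2/j^2 leaves zeta values and the telescoping sum of 1 / (j^2 - i^2) over i \<noteq> j, which
  is -3 / (4 j^2); the columns add up to the products eta(2c+1) zeta(2a-2c). Equating the two
  values determines A(2a).
\<close>

lemma altH_eq_sum_lessThan: "altH b n = (\<Sum>k<n. (-1) ^ k / real (Suc k) ^ b)"
  unfolding altH_def using sum.atLeast1_atMost_eq[of "\<lambda>k. (-1) ^ (k - 1) / real k ^ b" n]
  by simp

lemma altH_Suc: "altH b (Suc n) = altH b n + (-1) ^ n / real (Suc n) ^ b"
  by (simp add: altH_eq_sum_lessThan)

lemma zetaN_sums: "s \<ge> 2 \<Longrightarrow> (\<lambda>n. 1 / real (Suc n) ^ s) sums zetaN s"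
proof -
  assume "s \<ge> 2"
  then have "summable (\<lambda>n. inverse (real n ^ s))"
    by (rule inverse_power_summable)
  then have "summable (\<lambda>n. 1 / real (Suc n) ^ s)"
    by (subst (asm) summable_Suc_iff[symmetric]) (simp add: divide_inverse)
  then show ?thesis
    by (simp add: zetaN_def summable_sums)
qed

lemma altzetaN_sums: "s \<ge> 1 \<Longrightarrow> (\<lambda>n. (-1) ^ n / real (Suc n) ^ s) sums altzetaN s"
proof -
  assume "s \<ge> 1"
  have "(\<lambda>n. (1 / real (Suc n)) ^ s) \<longlonglongrightarrow> 0 ^ s"
    using LIMSEQ_inverse_real_of_nat by (intro tendsto_power) (simp add: divide_inverse)
  then have "(\<lambda>n. 1 / real (Suc n) ^ s) \<longlonglongrightarrow> 0"
    using \<open>s \<ge> 1\<close> by (simp add: power_one_over power_0_left)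
  then have "summable (\<lambda>n. (-1) ^ n * (1 / real (Suc n) ^ s))"
    by (rule summable_Leibniz') (auto intro!: divide_left_mono power_mono)
  then show ?thesis
    by (simp add: altzetaN_def summable_sums)
qed

lemma altzetaN_1: "altzetaN 1 = ln 2"
  using altzetaN_sums[of 1] alternating_harmonic_series_sums by (simp add: sums_unique2)

lemma altH_tendsto: "s \<ge> 1 \<Longrightarrow> altH s \<longlonglongrightarrow> altzetaN s"
  using altzetaN_sums unfolding sums_def altH_eq_sum_lessThan by simp

definition alt_euler_sum :: "nat \<Rightarrow> real" where
  "alt_euler_sum s = (\<Sum>k. (-1) ^ k * altH 1 (Suc k) / real (Suc k) ^ s)"

lemma alt_euler_sum_sums:
  assumes "s \<ge> 2"
  shows "(\<lambda>k. (-1) ^ k * altH 1 (Suc k) / real (Suc k) ^ s) sums alt_euler_sum s"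
proof -
  obtain B where B: "\<And>n. norm (altH 1 n) \<le> B"
    using altH_tendsto[of 1] convergentI convergent_imp_Bseq Bseq_def by (metis le_refl)
  have "summable (\<lambda>k. B * (1 / real (Suc k) ^ s))"
    using zetaN_sums[OF assms] by (intro summable_mult) (rule sums_summable)
  then have "summable (\<lambda>k. (-1) ^ k * altH 1 (Suc k) / real (Suc k) ^ s)"
    by (rule summable_comparison_test')
       (use B in \<open>auto simp: abs_mult power_abs intro!: divide_right_mono\<close>)
  then show ?thesis
    by (simp add: alt_euler_sum_def summable_sums)
qed

lemma altH_series_partial_sum:
  "(\<Sum>m<N. (-1) ^ Suc m * altH s m / real (Suc m)) =
     (\<Sum>k<N. (-1) ^ k * altH 1 (Suc k) / real (Suc k) ^ s) - altH 1 N * altH s N"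
proof (induction N)
  case (Suc N)
  then show ?case
    unfolding sum.lessThan_Suc Suc altH_Suc[of 1 N] altH_Suc[of s N]
    by (simp add: algebra_simps add_divide_distrib)
qed (simp add: altH_def)

lemma altH_series_sums:
  assumes "s \<ge> 2"
  shows "(\<lambda>m. (-1) ^ Suc m * altH s m / real (Suc m)) sums (alt_euler_sum s - ln 2 * altzetaN s)"
  unfolding sums_def altH_series_partial_sum altzetaN_1[symmetric] using assms
  by (intro tendsto_diff tendsto_mult altH_tendsto alt_euler_sum_sums[unfolded sums_def]) auto

lemma neg_one_power_diff: "t \<le> i \<Longrightarrow> (-1 :: real) ^ (i - t) = (-1) ^ i * (-1) ^ t"
proof -
  assume "t \<le> i"
  then have "(-1 :: real) ^ i = (-1) ^ (i - t) * (-1) ^ t"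
    by (simp flip: power_add)
  then show ?thesis
    by simp
qed

lemma alternating_inverse_diff_sums:
  "(\<lambda>j. if j = i then 0 else (-1) ^ j / (real j - real i)) sums ((-1) ^ i * (altH 1 i - ln 2))"
proof -
  define f where "f j = (if j = i then 0 else (-1) ^ j / (real j - real i))" for j
  have "(\<lambda>t. (-1) ^ Suc i * ((-1) ^ t / real (Suc t))) sums ((-1) ^ Suc i * ln 2)"
    by (intro sums_mult alternating_harmonic_series_sums)
  moreover have "(\<lambda>t. f (t + Suc i)) = (\<lambda>t. (-1) ^ Suc i * ((-1) ^ t / real (Suc t)))"
    by (auto simp: f_def power_add)
  ultimately have "f sums ((-1) ^ Suc i * ln 2 + (\<Sum>j<Suc i. f j))"
    by (metis sums_iff_shift)
  moreover have "(\<Sum>j<Suc i. f j) = (\<Sum>t<i. f (i - Suc t))"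
    using sum.atLeastLessThan_rev[of f 0 i] by (simp add: f_def atLeast0LessThan)
  moreover have "\<dots> = (-1) ^ i * altH 1 i"
    unfolding altH_eq_sum_lessThan sum_distrib_left
  proof (rule sum.cong)
    fix t assume "t \<in> {..<i}"
    then have "real (i - Suc t) - real i = - (1 + real t)"
      and "(-1) ^ (i - Suc t) = (-1) ^ i * (-1 :: real) ^ Suc t"
      by (simp_all add: of_nat_diff neg_one_power_diff)
    then show "f (i - Suc t) = (-1) ^ i * ((-1) ^ t / real (Suc t) ^ 1)"
      using \<open>t \<in> {..<i}\<close> by (simp add: f_def field_simps)
  qed simp
  ultimately have "f sums ((-1) ^ i * (altH 1 i - ln 2))"
    by (simp add: algebra_simps)
  then show ?thesis
    unfolding f_def .
qed

lemma alternating_inverse_add_sums: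
  "(\<lambda>j. (-1) ^ j / (real j + real i + 2)) sums ((-1) ^ Suc i * (ln 2 - altH 1 (Suc i)))"
proof -
  have "(\<lambda>t. (-1) ^ (t + Suc i) / real (Suc (t + Suc i))) sums (ln 2 - altH 1 (Suc i))"
    using alternating_harmonic_series_sums sums_iff_shift[of "\<lambda>k. (-1) ^ k / real (Suc k)" "Suc i"]
    by (simp add: altH_eq_sum_lessThan)
  then have "(\<lambda>t. (-1) ^ Suc i * ((-1) ^ (t + Suc i) / real (Suc (t + Suc i))))
      sums ((-1) ^ Suc i * (ln 2 - altH 1 (Suc i)))"
    by (rule sums_mult)
  moreover have "(\<lambda>t. (-1) ^ Suc i * ((-1) ^ (t + Suc i) / real (Suc (t + Suc i))))
      = (\<lambda>j. (-1) ^ j / (real j + real i + 2))"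
    by (auto simp: power_add mult.left_commute)
  ultimately show ?thesis
    by simp
qed

lemma sums_diff_shift:
  fixes f :: "nat \<Rightarrow> 'a :: real_normed_vector"
  assumes "f \<longlonglongrightarrow> 0"
  shows "(\<lambda>n. f n - f (n + p)) sums (\<Sum>n<p. f n)"
proof (induction p)
  case (Suc p)
  have "(\<lambda>n. f (n + p)) \<longlonglongrightarrow> 0"
    using assms by (rule LIMSEQ_ignore_initial_segment)
  then have "(\<lambda>n. f (n + p) - f (Suc n + p)) sums (f (0 + p) - 0)"
    by (rule telescope_sums')
  then have "(\<lambda>n. (f n - f (n + p)) + (f (n + p) - f (n + Suc p))) sums ((\<Sum>n<p. f n) + f p)"
    using Suc by (intro sums_add) simp_all
  then show ?case
    by simp
qed simp

lemma harm_shift_eq: "(\<Sum>i<n. 1 / real (i + p + 1)) = harm (p + n) - (harm p :: real)"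
  by (induction n) (simp_all add: harm_Suc divide_inverse add_ac)

lemma harm_reverse_eq: "(\<Sum>i<j. 1 / (real j - real i)) = (harm j :: real)"
proof -
  have "(\<Sum>i<j. 1 / (real j - real i)) = (\<Sum>t<j. 1 / (real j - real (j - Suc t)))"
    using sum.atLeastLessThan_rev[of "\<lambda>i. 1 / (real j - real i)" 0 j] by (simp add: atLeast0LessThan)
  also have "\<dots> = (\<Sum>t<j. inverse (real (Suc t)))"
    by (rule sum.cong) (auto simp: of_nat_diff divide_inverse)
  finally show ?thesis
    by (simp add: harm_altdef)
qed

lemma inverse_square_diff_eq:
  fixes K M :: real
  assumes "M \<noteq> K" "M + K \<noteq> 0" "M \<noteq> 0"
  shows "1 / (M ^ 2 - K ^ 2) = (1 / (M - K) + 1 / (M + K)) / (2 * M)"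
proof -
  have "M ^ 2 - K ^ 2 = (M - K) * (M + K)"
    by (simp add: power2_eq_square algebra_simps)
  moreover have "M - K \<noteq> 0"
    using assms by simp
  ultimately show ?thesis
    using assms by (simp add: divide_simps)
qed

lemma inverse_square_diff_tail_sums:
  fixes j :: nat
  defines "M \<equiv> real (Suc j)"
  shows "(\<lambda>t. 1 / (M ^ 2 - real (Suc (t + Suc j)) ^ 2)) sums (- harm (2 * Suc j) / (2 * M))"
proof -
  define f :: "nat \<Rightarrow> real" where "f = (\<lambda>t. 1 / real (Suc t))"
  have "1 / (M ^ 2 - real (Suc (t + Suc j)) ^ 2) = - (f t - f (t + 2 * Suc j)) / (2 * M)" for t
  proof -
    have "1 / (M ^ 2 - real (Suc (t + Suc j)) ^ 2)
        = (1 / (M - real (Suc (t + Suc j))) + 1 / (M + real (Suc (t + Suc j)))) / (2 * M)"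
      by (rule inverse_square_diff_eq) (simp_all add: M_def)
    also have "M - real (Suc (t + Suc j)) = - real (Suc t)"
      by (simp add: M_def)
    also have "M + real (Suc (t + Suc j)) = real (Suc (t + 2 * Suc j))"
      by (simp add: M_def)
    finally show ?thesis
      unfolding f_def by (simp add: divide_minus_right algebra_simps del: of_nat_Suc)
  qed
  moreover have "(\<lambda>t. - (f t - f (t + 2 * Suc j)) / (2 * M)) sums (- harm (2 * Suc j) / (2 * M))"
  proof -
    have "f \<longlonglongrightarrow> 0"
      using LIMSEQ_inverse_real_of_nat by (simp add: f_def divide_inverse)
    moreover have "(\<Sum>n<2 * Suc j. f n) = harm (2 * Suc j)"
      by (simp add: f_def harm_altdef divide_inverse)
    ultimately show ?thesis
      using sums_diff_shift by (metis sums_divide sums_minus)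
  qed
  ultimately show ?thesis
    by simp
qed

lemma inverse_square_diff_sums:
  fixes j :: nat
  defines "M \<equiv> real (Suc j)"
  shows "(\<lambda>i. if i = j then 0 else 1 / (M ^ 2 - real (Suc i) ^ 2)) sums (- 3 / (4 * M ^ 2))"
proof -
  define Q where "Q i = (if i = j then 0 else 1 / (M ^ 2 - real (Suc i) ^ 2))" for i
  have "(\<lambda>t. Q (t + Suc j)) sums (- harm (2 * Suc j) / (2 * M))"
    using inverse_square_diff_tail_sums[of j] by (simp add: Q_def M_def)
  then have "Q sums (- harm (2 * Suc j) / (2 * M) + (\<Sum>i<Suc j. Q i))"
    by (metis sums_iff_shift)
  also have "(\<Sum>i<Suc j. Q i) = (\<Sum>i<j. Q i)"
    by (simp add: Q_def)
  also have "\<dots> = (\<Sum>i<j. (1 / (real j - real i) + 1 / real (i + Suc j + 1)) / (2 * M))"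
    by (intro sum.cong refl) (auto simp: Q_def M_def inverse_square_diff_eq add_ac)
  also have "\<dots> = (harm j + (harm (Suc j + j) - harm (Suc j))) / (2 * M)"
    by (simp only: sum_divide_distrib[symmetric] sum.distrib harm_reverse_eq harm_shift_eq)
  also have "- harm (2 * Suc j) / (2 * M) + \<dots> = - 3 / (4 * M ^ 2)"
  proof -
    have "2 * Suc j = Suc (Suc j + j)"
      by simp
    then have h1: "harm (2 * Suc j) = harm (Suc j + j) + 1 / (2 * M)"
      by (simp only: harm_Suc) (simp add: M_def divide_inverse)
    have h2: "harm (Suc j) = harm j + 1 / M"
      by (simp only: harm_Suc) (simp add: M_def divide_inverse)
    have "M > 0"
      by (simp add: M_def)
    then show ?thesis
      unfolding h1 h2 by (simp add: field_simps power2_eq_square)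
  qed
  finally show ?thesis
    unfolding Q_def .
qed

lemma inverse_mult_square_diff_eq:
  fixes K M :: real
  assumes "0 < K" "0 < M" "M \<noteq> K"
  shows "1 / (M * (M ^ 2 - K ^ 2)) = (1 / (2 * (M - K)) + 1 / (2 * (M + K)) - 1 / M) / K ^ 2"
proof -
  have "M ^ 2 - K ^ 2 = (M - K) * (M + K)"
    by (simp add: power2_eq_square algebra_simps)
  moreover have "M - K \<noteq> 0" "M + K \<noteq> 0"
    using assms by auto
  ultimately show ?thesis
    using assms by (simp add: divide_simps) (simp add: power2_eq_square algebra_simps)
qed

lemma inverse_power_mult_diff_eq:
  fixes x y :: "'a :: field"
  assumes "x \<noteq> 0" "y \<noteq> 0" "y \<noteq> x"
  shows "1 / (x ^ b * (y - x)) = (\<Sum>c=1..b. 1 / (y ^ c * x ^ (b + 1 - c))) + 1 / (y ^ b * (y - x))"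
proof (induction b)
  case (Suc b)
  have "1 / (x ^ Suc b * (y - x)) = 1 / (x ^ b * (y - x)) / x"
    by (simp add: mult_ac)
  also have "\<dots> = (\<Sum>c=1..b. 1 / (y ^ c * x ^ (b + 1 - c))) / x + 1 / (y ^ b * (y - x)) / x"
    unfolding Suc by (simp add: add_divide_distrib)
  also have "(\<Sum>c=1..b. 1 / (y ^ c * x ^ (b + 1 - c))) / x = (\<Sum>c=1..b. 1 / (y ^ c * x ^ (Suc b + 1 - c)))"
    unfolding sum_divide_distrib by (intro sum.cong refl) (simp add: Suc_diff_le)
  also have "1 / (y ^ b * (y - x)) / x = 1 / (y ^ Suc b * x ^ (Suc b + 1 - Suc b)) + 1 / (y ^ Suc b * (y - x))"
    using assms by (simp add: field_simps)
  finally show ?case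
    by (simp add: add.assoc)
qed simp

text \<open>The term (i+1, j+1) of the double series above, with a = b + 1.\<close>

definition double_term :: "nat \<Rightarrow> nat \<Rightarrow> nat \<Rightarrow> real" where
  "double_term b i j = (if i = j then 0 else
     (-1) ^ Suc j / (real (Suc i) ^ (2 * b) * real (Suc j) * (real (Suc j) ^ 2 - real (Suc i) ^ 2)))"

lemma double_term_row_eq:
  assumes "j \<noteq> i"
  shows "double_term b i j =
    ((-1) ^ j / real (Suc j) - (-1) ^ j / (real j - real i) / 2 - (-1) ^ j / (real j + real i + 2) / 2)
      / real (Suc i) ^ (2 * b + 2)"
proof -
  define K where "K = real (Suc i)"
  define M where "M = real (Suc j)"
  have "0 < K" "0 < M" "M \<noteq> K" "real j - real i = M - K" "real j + real i + 2 = M + K"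
    using assms by (auto simp: M_def K_def)
  have "double_term b i j = (-1) ^ Suc j / K ^ (2 * b) * (1 / (M * (M ^ 2 - K ^ 2)))"
    using assms by (simp add: double_term_def M_def K_def)
  also have "\<dots> = (-1) ^ Suc j / K ^ (2 * b) * ((1 / (2 * (M - K)) + 1 / (2 * (M + K)) - 1 / M) / K ^ 2)"
    using \<open>0 < K\<close> \<open>0 < M\<close> \<open>M \<noteq> K\<close> by (simp add: inverse_mult_square_diff_eq)
  also have "\<dots> = ((-1) ^ j / M - (-1) ^ j / (M - K) / 2 - (-1) ^ j / (M + K) / 2) / K ^ (2 * b + 2)"
    by (simp add: power_add power2_eq_square field_simps) (simp add: divide_simps)
  finally show ?thesis
    unfolding \<open>real j - real i = M - K\<close> \<open>real j + real i + 2 = M + K\<close>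
      M_def[symmetric] K_def[symmetric] .
qed

lemma double_term_row_sums:
  fixes b i :: nat
  defines "K \<equiv> real (Suc i)"
  shows "(\<lambda>j. double_term b i j) sums
           ((ln 2 + (-1) ^ i * (ln 2 - altH 1 (Suc i)) + (1/2 - 3/4 * (-1) ^ i) / K) / K ^ (2 * b + 2))"
proof -
  define A where "A j = (-1) ^ j / real (Suc j)" for j
  define B where "B j = (if j = i then 0 else (-1) ^ j / (real j - real i))" for j
  define C where "C j = (-1) ^ j / (real j + real i + 2)" for j
  \<comment> \<open>Unlike \<open>B\<close>, the series \<open>A\<close> and \<open>C\<close> have a term at \<open>j = i\<close>, which is removed by hand.\<close>
  have series: "(\<lambda>j. (A j - B j / 2 - C j / 2 - (if j = i then A i - C i / 2 else 0)) / K ^ (2 * b + 2))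
     sums ((ln 2 - (-1) ^ i * (altH 1 i - ln 2) / 2 - (-1) ^ Suc i * (ln 2 - altH 1 (Suc i)) / 2
            - (A i - C i / 2)) / K ^ (2 * b + 2))"
    unfolding A_def B_def C_def
    by (intro sums_divide sums_diff alternating_harmonic_series_sums alternating_inverse_diff_sums
        alternating_inverse_add_sums sums_single)
  have terms: "(A j - B j / 2 - C j / 2 - (if j = i then A i - C i / 2 else 0)) / K ^ (2 * b + 2)
      = double_term b i j" for j
  proof (cases "j = i")
    case False
    then show ?thesis
      by (simp add: A_def B_def C_def K_def double_term_row_eq)
  qed (simp add: B_def double_term_def)
  have total: "ln 2 - (-1) ^ i * (altH 1 i - ln 2) / 2 - (-1) ^ Suc i * (ln 2 - altH 1 (Suc i)) / 2
      - (A i - C i / 2) = ln 2 + (-1) ^ i * (ln 2 - altH 1 (Suc i)) + (1/2 - 3/4 * (-1) ^ i) / K"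
  proof -
    have diagonal: "A i = (-1) ^ i / K" "C i = (-1) ^ i / (2 * K)"
      "altH 1 i = altH 1 (Suc i) - (-1) ^ i / K"
      by (simp_all add: A_def C_def K_def altH_Suc)
    have "K > 0"
      by (simp add: K_def)
    then show ?thesis
      unfolding diagonal by (simp add: field_simps)
  qed
  show ?thesis
    using series unfolding terms total .
qed

lemma double_term_column_eq:
  assumes "i \<noteq> j"
  shows "double_term b i j = (-1) ^ Suc j / real (Suc j) *
    ((\<Sum>c=1..b. 1 / real (Suc j) ^ (2 * c) * (1 / real (Suc i) ^ (2 * (b + 1 - c))))
     + 1 / real (Suc j) ^ (2 * b) * (1 / (real (Suc j) ^ 2 - real (Suc i) ^ 2)))"
proof -
  define K where "K = real (Suc i)"
  define M where "M = real (Suc j)"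
  have "K ^ 2 \<noteq> 0" "M ^ 2 \<noteq> 0" "M ^ 2 \<noteq> K ^ 2"
    using assms by (auto simp: K_def M_def power2_eq_iff)
  have "double_term b i j = (-1) ^ Suc j / M * (1 / ((K ^ 2) ^ b * (M ^ 2 - K ^ 2)))"
    using assms by (simp add: double_term_def K_def M_def power_mult)
  also have "\<dots> = (-1) ^ Suc j / M *
      ((\<Sum>c=1..b. 1 / ((M ^ 2) ^ c * (K ^ 2) ^ (b + 1 - c))) + 1 / ((M ^ 2) ^ b * (M ^ 2 - K ^ 2)))"
    using inverse_power_mult_diff_eq[OF \<open>K ^ 2 \<noteq> 0\<close> \<open>M ^ 2 \<noteq> 0\<close> \<open>M ^ 2 \<noteq> K ^ 2\<close>] by simp
  finally show ?thesis
    by (simp add: K_def M_def power_mult)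
qed

lemma sum_inverse_power_complement_eq:
  fixes M :: "'a :: field"
  shows "(\<Sum>c=1..b. 1 / M ^ (2 * c) * (1 / M ^ (2 * (b + 1 - c)))) = of_nat b / M ^ (2 * b + 2)"
proof -
  have "1 / M ^ (2 * c) * (1 / M ^ (2 * (b + 1 - c))) = 1 / M ^ (2 * b + 2)" if "c \<in> {1..b}" for c
  proof -
    have "2 * b + 2 = 2 * c + 2 * (b + 1 - c)"
      using that by auto
    then have "M ^ (2 * b + 2) = M ^ (2 * c) * M ^ (2 * (b + 1 - c))"
      by (metis power_add)
    then show ?thesis
      by simp
  qed
  then show ?thesis
    by simp
qed

lemma double_term_column_total_eq:
  fixes M :: real
  assumes "M > 0"
  shows "(-1) ^ Suc j / M * ((\<Sum>c=1..b. 1 / M ^ (2 * c) * zetaN (2 * (b + 1 - c)))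
           - real b / M ^ (2 * b + 2) + 1 / M ^ (2 * b) * (- 3 / (4 * M ^ 2)))
         = (real b + 3/4) * ((-1) ^ j / M ^ (2 * b + 3))
           - (\<Sum>c=1..b. zetaN (2 * (b + 1 - c)) * ((-1) ^ j / M ^ (2 * c + 1)))"
proof -
  have rest: "(-1) ^ Suc j / M * (- (real b / M ^ (2 * b + 2)) + 1 / M ^ (2 * b) * (- 3 / (4 * M ^ 2)))
      = (real b + 3/4) * ((-1) ^ j / M ^ (2 * b + 3))"
    using assms by (simp add: power_add field_simps eval_nat_numeral)
  have zetas: "(-1) ^ Suc j / M * (\<Sum>c=1..b. 1 / M ^ (2 * c) * zetaN (2 * (b + 1 - c)))
      = - (\<Sum>c=1..b. zetaN (2 * (b + 1 - c)) * ((-1) ^ j / M ^ (2 * c + 1)))"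
    unfolding sum_distrib_left sum_negf[symmetric] by (intro sum.cong refl) (simp add: power_add)
  have "(-1) ^ Suc j / M * ((\<Sum>c=1..b. 1 / M ^ (2 * c) * zetaN (2 * (b + 1 - c)))
           - real b / M ^ (2 * b + 2) + 1 / M ^ (2 * b) * (- 3 / (4 * M ^ 2)))
      = (-1) ^ Suc j / M * (\<Sum>c=1..b. 1 / M ^ (2 * c) * zetaN (2 * (b + 1 - c)))
        + (-1) ^ Suc j / M * (- (real b / M ^ (2 * b + 2)) + 1 / M ^ (2 * b) * (- 3 / (4 * M ^ 2)))"
    by (simp add: algebra_simps)
  then show ?thesis
    unfolding rest zetas by simp
qed

lemma double_term_column_sums:
  fixes b j :: nat
  defines "M \<equiv> real (Suc j)"
  shows "(\<lambda>i. double_term b i j) sums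
           ((real b + 3/4) * ((-1) ^ j / M ^ (2 * b + 3))
            - (\<Sum>c=1..b. zetaN (2 * (b + 1 - c)) * ((-1) ^ j / M ^ (2 * c + 1))))"
proof -
  define x where "x = (-1) ^ Suc j / M"
  define Q where "Q i = (if i = j then 0 else 1 / (M ^ 2 - real (Suc i) ^ 2))" for i
  \<comment> \<open>The zeta series include the term \<open>i = j\<close>, which is removed by hand.\<close>
  have series: "(\<lambda>i. x * ((\<Sum>c=1..b. 1 / M ^ (2 * c) * (1 / real (Suc i) ^ (2 * (b + 1 - c))))
      - (if i = j then real b / M ^ (2 * b + 2) else 0) + 1 / M ^ (2 * b) * Q i))
      sums (x * ((\<Sum>c=1..b. 1 / M ^ (2 * c) * zetaN (2 * (b + 1 - c)))
                 - real b / M ^ (2 * b + 2) + 1 / M ^ (2 * b) * (- 3 / (4 * M ^ 2))))"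
    unfolding Q_def M_def
    by (intro sums_mult sums_add sums_diff sums_sum zetaN_sums sums_single inverse_square_diff_sums)
       auto
  have terms: "x * ((\<Sum>c=1..b. 1 / M ^ (2 * c) * (1 / real (Suc i) ^ (2 * (b + 1 - c))))
      - (if i = j then real b / M ^ (2 * b + 2) else 0) + 1 / M ^ (2 * b) * Q i) = double_term b i j" for i
  proof (cases "i = j")
    case True
    then show ?thesis
      using sum_inverse_power_complement_eq[of M b] by (simp add: Q_def M_def double_term_def)
  qed (simp add: double_term_column_eq x_def Q_def M_def)
  have total: "x * ((\<Sum>c=1..b. 1 / M ^ (2 * c) * zetaN (2 * (b + 1 - c)))
                 - real b / M ^ (2 * b + 2) + 1 / M ^ (2 * b) * (- 3 / (4 * M ^ 2)))
      = (real b + 3/4) * ((-1) ^ j / M ^ (2 * b + 3))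
        - (\<Sum>c=1..b. zetaN (2 * (b + 1 - c)) * ((-1) ^ j / M ^ (2 * c + 1)))"
    unfolding x_def by (rule double_term_column_total_eq) (simp add: M_def)
  show ?thesis
    using series unfolding terms total .
qed

lemma abs_double_term_le:
  assumes "i \<noteq> j"
  shows "\<bar>double_term b i j\<bar> \<le> 1 / (real (Suc (min i j)) * \<bar>real i - real j\<bar> * real (Suc (max i j)))"
proof -
  define K where "K = real (Suc i)"
  define M where "M = real (Suc j)"
  have "K \<ge> 1" "M \<ge> 1"
    by (simp_all add: K_def M_def)
  have "M ^ 2 - K ^ 2 = (M - K) * (M + K)"
    by (simp add: power2_eq_square algebra_simps)
  then have "\<bar>M ^ 2 - K ^ 2\<bar> = \<bar>M - K\<bar> * (M + K)"
    using \<open>K \<ge> 1\<close> \<open>M \<ge> 1\<close> by (simp add: abs_mult)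
  moreover have "\<bar>M - K\<bar> = \<bar>real i - real j\<bar>" "\<bar>M - K\<bar> > 0"
    using assms by (auto simp: K_def M_def)
  ultimately have "\<bar>double_term b i j\<bar> = 1 / (K ^ (2 * b) * (M * \<bar>real i - real j\<bar> * (M + K)))"
    using assms by (simp add: double_term_def K_def M_def abs_mult power_abs mult_ac)
  also have "\<dots> \<le> 1 / (real (Suc (min i j)) * \<bar>real i - real j\<bar> * real (Suc (max i j)))"
  proof (rule divide_left_mono)
    have "real (Suc (min i j)) * \<bar>real i - real j\<bar> * real (Suc (max i j)) \<le> M * \<bar>real i - real j\<bar> * (M + K)"
      by (intro mult_mono) (auto simp: K_def M_def)
    also have "\<dots> \<le> K ^ (2 * b) * (M * \<bar>real i - real j\<bar> * (M + K))"
    proof -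
      have "0 \<le> M * \<bar>real i - real j\<bar> * (M + K)"
        using \<open>K \<ge> 1\<close> \<open>M \<ge> 1\<close> by simp
      then show ?thesis
        using \<open>K \<ge> 1\<close> one_le_power[of K "2 * b"] by (simp add: mult_le_cancel_right1)
    qed
    finally show "real (Suc (min i j)) * \<bar>real i - real j\<bar> * real (Suc (max i j))
        \<le> K ^ (2 * b) * (M * \<bar>real i - real j\<bar> * (M + K))" .
    show "0 < K ^ (2 * b) * (M * \<bar>real i - real j\<bar> * (M + K)) * (real (Suc (min i j)) * \<bar>real i - real j\<bar> * real (Suc (max i j)))"
      using assms \<open>K \<ge> 1\<close> \<open>M \<ge> 1\<close> by simp
  qed simp
  finally show ?thesis .
qed

lemma inverse_le_powr_three_halves:
  fixes K D :: real
  assumes "0 < K" "0 < D"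
  shows "1 / (K * D * (K + D)) \<le> K powr (-3/2) * D powr (-3/2)"
proof -
  have "sqrt (K * D) \<le> K + D"
    using arith_geo_mean_sqrt[of K D] assms by simp
  then have "K * D * sqrt (K * D) \<le> K * D * (K + D)"
    using assms by simp
  then have "1 / (K * D * (K + D)) \<le> 1 / (K * D * sqrt (K * D))"
    using assms by (intro divide_left_mono) auto
  also have "K * D * sqrt (K * D) = (K * D) powr (3/2)"
    using assms powr_add[of "K * D" 1 "1/2"] by (simp add: powr_half_sqrt)
  also have "1 / (K * D) powr (3/2) = K powr (-3/2) * D powr (-3/2)"
    using assms by (simp add: powr_minus_divide powr_mult)
  finally show ?thesis .
qed

lemma summable_on_off_diagonal:
  fixes f :: "nat \<times> nat \<Rightarrow> 'a :: topological_comm_monoid_add"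
  assumes diagonal: "\<And>i. f (i, i) = 0"
    and upper: "(\<lambda>(x, d). f (x, x + d + 1)) summable_on UNIV \<times> UNIV"
    and lower: "(\<lambda>(x, d). f (x + d + 1, x)) summable_on UNIV \<times> UNIV"
  shows "f summable_on UNIV \<times> UNIV"
proof -
  have "bij_betw (\<lambda>(x, d). (x, x + d + 1)) (UNIV \<times> UNIV) {(i, j). i < (j :: nat)}" (is "bij_betw ?g _ _")
    by (rule bij_betw_byWitness[where f' = "\<lambda>(i, j). (i, j - i - 1)"]) auto
  then have "f summable_on {(i, j). i < j}"
    using upper by (simp add: summable_on_reindex_bij_betw[of ?g, symmetric] case_prod_unfold)
  moreover have "bij_betw (\<lambda>(x, d). (x + d + 1, x)) (UNIV \<times> UNIV) {(i, j). j < (i :: nat)}"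
    (is "bij_betw ?h _ _")
    by (rule bij_betw_byWitness[where f' = "\<lambda>(i, j). (j, i - j - 1)"]) auto
  then have "f summable_on {(i, j). j < i}"
    using lower by (simp add: summable_on_reindex_bij_betw[of ?h, symmetric] case_prod_unfold)
  ultimately have "f summable_on {(i, j). i < j} \<union> {(i, j). j < i}"
    by (rule summable_on_Un_disjoint) auto
  moreover have "f summable_on {(i, j). i < j} \<union> {(i, j). j < i} \<longleftrightarrow> f summable_on UNIV \<times> UNIV"
    by (rule summable_on_cong_neutral) (auto simp: diagonal)
  ultimately show ?thesis
    by simp
qed

lemma nonneg_summable_on_product:
  fixes f g :: "nat \<Rightarrow> real"
  assumes "summable f" "summable g" "\<And>n. 0 \<le> f n" "\<And>n. 0 \<le> g n"
  shows "(\<lambda>(x, y). f x * g y) summable_on UNIV \<times> UNIV"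
proof (rule summable_on_SigmaI)
  have "(g has_sum suminf g) UNIV"
    using assms by (intro sums_nonneg_imp_has_sum summable_sums) auto
  then show "((\<lambda>y. (\<lambda>(x, y). f x * g y) (x, y)) has_sum f x * suminf g) UNIV" for x
    by (simp add: has_sum_cmult_right)
  have "(f has_sum suminf f) UNIV"
    using assms by (intro sums_nonneg_imp_has_sum summable_sums) auto
  then show "(\<lambda>x. f x * suminf g) summable_on UNIV"
    using has_sum_cmult_left summable_on_def by blast
qed (use assms in auto)

lemma double_term_summable: "(\<lambda>(i, j). double_term b i j) summable_on UNIV \<times> UNIV"
proof -
  define u :: "nat \<Rightarrow> real" where "u n = real (Suc n) powr (-3/2)" for n
  have "summable (\<lambda>n. real n powr (-3/2))"
    by (simp add: summable_real_powr_iff)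
  then have "summable u"
    unfolding u_def by (subst (asm) summable_Suc_iff[symmetric]) simp
  then have product: "(\<lambda>(x, d). u x * u d) summable_on UNIV \<times> UNIV"
    by (intro nonneg_summable_on_product \<open>summable u\<close>) (simp_all add: u_def)
  have key: "1 / (real (Suc x) * real (Suc d) * real (Suc (x + d + 1))) \<le> u x * u d" for x d
  proof -
    have "real (Suc (x + d + 1)) = real (Suc x) + real (Suc d)"
      by simp
    then show ?thesis
      unfolding u_def using inverse_le_powr_three_halves[of "real (Suc x)" "real (Suc d)"] by simp
  qed
  have bound: "\<bar>double_term b x (x + d + 1)\<bar> \<le> u x * u d" "\<bar>double_term b (x + d + 1) x\<bar> \<le> u x * u d"
    for x d
    using abs_double_term_le[of x "x + d + 1" b] abs_double_term_le[of "x + d + 1" x b] key[of x d]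
    by (simp_all add: abs_of_nonpos algebra_simps)
  have upper: "(\<lambda>p. norm ((\<lambda>(x, d). double_term b x (x + d + 1)) p)) summable_on UNIV \<times> UNIV"
    by (rule Infinite_Sum.abs_summable_on_comparison_test'[OF product]) (use bound in auto)
  have lower: "(\<lambda>p. norm ((\<lambda>(x, d). double_term b (x + d + 1) x) p)) summable_on UNIV \<times> UNIV"
    by (rule Infinite_Sum.abs_summable_on_comparison_test'[OF product]) (use bound in auto)
  show ?thesis
    by (rule summable_on_off_diagonal)
       (use abs_summable_summable[OF upper] abs_summable_summable[OF lower] in \<open>simp_all add: double_term_def\<close>)
qed

lemma iterated_sums_eq:
  fixes f :: "nat \<Rightarrow> nat \<Rightarrow> real"
  assumes summable: "(\<lambda>(i, j). f i j) summable_on UNIV \<times> UNIV"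
    and rows: "\<And>i. f i sums r i" and "r sums R"
    and columns: "\<And>j. (\<lambda>i. f i j) sums c j" and "c sums C"
  shows "R = C"
proof -
  have has_sum: "(g has_sum s) UNIV" if "g summable_on UNIV" "g sums s" for g :: "nat \<Rightarrow> real" and s
  proof -
    have "(g has_sum infsum g UNIV) UNIV"
      using that(1) by simp
    moreover have "infsum g UNIV = s"
      using has_sum_imp_sums[OF calculation] that(2) by (rule sums_unique2)
    ultimately show ?thesis
      by simp
  qed
  define T where "T = infsum (\<lambda>(i, j). f i j) (UNIV \<times> UNIV)"
  have T: "((\<lambda>(i, j). f i j) has_sum T) (UNIV \<times> UNIV)"
    using summable by (simp add: T_def)
  have "(r has_sum T) UNIV"
    using summable_on_SigmaD1[OF summable] rows by (intro has_sum_Sigma'[OF T]) (simp add: has_sum)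
  then have "R = T"
    using \<open>r sums R\<close> by (simp add: has_sum_imp_sums sums_unique2)
  moreover have T': "((\<lambda>(j, i). f i j) has_sum T) (UNIV \<times> UNIV)"
    using T by (subst (asm) has_sum_swap) simp
  then have "(c has_sum T) UNIV"
    using summable_on_SigmaD1[of "\<lambda>j i. f i j", OF has_sum_imp_summable[OF T']] columns
    by (intro has_sum_Sigma'[OF T']) (simp add: has_sum)
  then have "C = T"
    using \<open>c sums C\<close> by (simp add: has_sum_imp_sums sums_unique2)
  ultimately show ?thesis
    by simp
qed

lemma double_term_row_totals_sums:
  "(\<lambda>i. (ln 2 + (-1) ^ i * (ln 2 - altH 1 (Suc i)) + (1/2 - 3/4 * (-1) ^ i) / real (Suc i))
          / real (Suc i) ^ (2 * b + 2))
     sums (ln 2 * zetaN (2 * b + 2) + ln 2 * altzetaN (2 * b + 2) - alt_euler_sum (2 * b + 2)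
           + 1/2 * zetaN (2 * b + 3) - 3/4 * altzetaN (2 * b + 3))"
proof -
  have expand: "(ln 2 + x * (ln 2 - h) + (1/2 - 3/4 * x) / K) / P
      = ln 2 * (1 / P) + ln 2 * (x / P) - x * h / P + 1/2 * (1 / (P * K)) - 3/4 * (x / (P * K))"
    if "K > 0" "P > 0" for x h K P :: real
    using that by (simp add: field_simps)
  have "(\<lambda>i. ln 2 * (1 / real (Suc i) ^ (2 * b + 2)) + ln 2 * ((-1) ^ i / real (Suc i) ^ (2 * b + 2))
          - (-1) ^ i * altH 1 (Suc i) / real (Suc i) ^ (2 * b + 2)
          + 1/2 * (1 / real (Suc i) ^ (2 * b + 3)) - 3/4 * ((-1) ^ i / real (Suc i) ^ (2 * b + 3)))
     sums (ln 2 * zetaN (2 * b + 2) + ln 2 * altzetaN (2 * b + 2) - alt_euler_sum (2 * b + 2)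
           + 1/2 * zetaN (2 * b + 3) - 3/4 * altzetaN (2 * b + 3))"
    by (intro sums_add sums_diff sums_mult zetaN_sums altzetaN_sums alt_euler_sum_sums) auto
  moreover have "real (Suc i) ^ (2 * b + 3) = real (Suc i) ^ (2 * b + 2) * real (Suc i)" for i
    by (simp add: power_add eval_nat_numeral)
  ultimately show ?thesis
    by (simp only: expand of_nat_0_less_iff zero_less_Suc zero_less_power)
qed

lemma double_term_column_totals_sums:
  "(\<lambda>j. (real b + 3/4) * ((-1) ^ j / real (Suc j) ^ (2 * b + 3))
          - (\<Sum>c=1..b. zetaN (2 * (b + 1 - c)) * ((-1) ^ j / real (Suc j) ^ (2 * c + 1))))
     sums ((real b + 3/4) * altzetaN (2 * b + 3)
           - (\<Sum>c=1..b. zetaN (2 * (b + 1 - c)) * altzetaN (2 * c + 1)))"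
  by (intro sums_diff sums_mult sums_sum altzetaN_sums) auto

lemma alt_euler_sum_even:
  assumes "a \<ge> 1"
  shows "alt_euler_sum (2 * a) = ln 2 * zetaN (2 * a) + ln 2 * altzetaN (2 * a)
           + zetaN (2 * a + 1) / 2 - (real a + 1/2) * altzetaN (2 * a + 1)
           + (\<Sum>j=1..a-1. altzetaN (2 * j + 1) * zetaN (2 * a - 2 * j))"
proof -
  obtain b where a: "a = Suc b"
    using assms by (cases a) auto
  have fubini: "ln 2 * zetaN (2 * b + 2) + ln 2 * altzetaN (2 * b + 2) - alt_euler_sum (2 * b + 2)
          + 1/2 * zetaN (2 * b + 3) - 3/4 * altzetaN (2 * b + 3)
      = (real b + 3/4) * altzetaN (2 * b + 3)
          - (\<Sum>c=1..b. zetaN (2 * (b + 1 - c)) * altzetaN (2 * c + 1))"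
    using double_term_summable double_term_row_sums double_term_row_totals_sums
      double_term_column_sums double_term_column_totals_sums
    by (rule iterated_sums_eq)
  have sum_eq: "(\<Sum>c=1..b. zetaN (2 * (b + 1 - c)) * altzetaN (2 * c + 1))
      = (\<Sum>j=1..a-1. altzetaN (2 * j + 1) * zetaN (2 * a - 2 * j))"
    by (simp add: a mult.commute diff_mult_distrib2)
  have in_terms_of_a: "2 * b + 2 = 2 * a" "2 * b + 3 = 2 * a + 1" "real b = real a - 1"
    by (simp_all add: a)
  have "ln 2 * zetaN (2 * a) + ln 2 * altzetaN (2 * a) - alt_euler_sum (2 * a)
          + 1/2 * zetaN (2 * a + 1) - 3/4 * altzetaN (2 * a + 1)
      = (real a - 1 + 3/4) * altzetaN (2 * a + 1)
          - (\<Sum>j=1..a-1. altzetaN (2 * j + 1) * zetaN (2 * a - 2 * j))"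
    using fubini unfolding sum_eq in_terms_of_a .
  then show ?thesis
    by (simp add: algebra_simps)
qed

theorem mainTheorem8:
  fixes a :: nat
  assumes "a \<ge> 1"
  shows "(\<lambda>m. (-1) ^ (Suc m) * altH (2 * a) m / real (Suc m)) sums
           (zetaN (2 * a + 1) / 2 - (real a + 1 / 2) * altzetaN (2 * a + 1)
            + ln 2 * zetaN (2 * a)
            + (\<Sum>j=1..a-1. altzetaN (2 * j + 1) * zetaN (2 * a - 2 * j)))"
proof -
  have "alt_euler_sum (2 * a) - ln 2 * altzetaN (2 * a)
      = zetaN (2 * a + 1) / 2 - (real a + 1 / 2) * altzetaN (2 * a + 1) + ln 2 * zetaN (2 * a)
        + (\<Sum>j=1..a-1. altzetaN (2 * j + 1) * zetaN (2 * a - 2 * j))"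
    unfolding alt_euler_sum_even[OF assms] by simp
  then show ?thesis
    using altH_series_sums[of "2 * a"] assms by simp
qed

end
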